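(* Let $k\in\{0,1,-1\}$ and let $a_1,a_2$ be real constants. Consider the system of ordinary differential equations for real functions $\hat H(t)=(H_1,H_2,H_3)^T$, $\hat h(t)=(h_1,h_2,h_3)^T$: $$\frac{d\hat H}{dt}=\hat H\times\hat\Omega+\hat h\times\hat a,\qquad \frac{d\hat h}{dt}=\hat h\times\hat\Omega+k\,(\hat H\times\hat a),$$ where $\times$ is the vector product in $\mathbb{R}^3$, $\hat a=(a_1,a_2,0)^T$ and $\hat\Omega=(H_1/2,\,H_2/2,\,H_3)^T$ (i.e. $c_1=c_2=2$, $c_3=1$, $a_3=0$). Put $z=\tfrac12(H_1+iH_2)$, $w=h_1+ih_2$, $a=a_1+ia_2$. Then along every solution the function $|z^2-a(w-ka)|^2$ is constant.
   Context: This is the Hamiltonian system on the Lie algebra of $E_3$ ($k=0$), $\mathfrak{so}_4$ ($k=1$) or $\mathfrak{so}(1,3)$ ($k=-1$) generated by $H=\frac12\big(\frac{H_1^2}{c_1}+\frac{H_2^2}{c_2}+\frac{H_3^2}{c_3}\big)+a_1h_1+a_2h_2+a_3h_3$ with $c_1=c_2=2c_3$, $a_3=0$, normalized so that $c_3=1$. *)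

theory Defs
  imports "HOL-Analysis.Analysis"
begin

definition Omega :: "real^3 \<Rightarrow> real^3" where
  "Omega H = vector [H$1 / 2, H$2 / 2, H$3]"

end

theory Submission
  imports Defs
begin

(* With z = (H1 + i H2)/2, w = h1 + i h2 and a = a1 + i a2 the equations of motion read
   z' = i (h3 a - H3 z)/2 and w' = i (h3 z - H3 w + k H3 a), so the Kowalevski variable
   P = z^2 - a (w - k a) satisfies P' = -i H3 P: it only rotates in the complex plane,
   and |P| is conserved. *)

lemma norm_constant_if_derivative_orthogonal:
  fixes f :: "real \<Rightarrow> 'a::real_inner"
  assumes "convex I"
    and deriv: "\<And>t. t \<in> I \<Longrightarrow> (f has_vector_derivative f' t) (at t within I)"
    and orth: "\<And>t. t \<in> I \<Longrightarrow> f t \<bullet> f' t = 0"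
  shows "\<exists>C. \<forall>t\<in>I. norm (f t) = C"
proof -
  have "((\<lambda>t. f t \<bullet> f t) has_vector_derivative 0) (at t within I)" if "t \<in> I" for t
    using bounded_bilinear.has_vector_derivative[OF bounded_bilinear_inner deriv deriv, OF that that]
      orth[OF that]
    by (simp add: inner_commute)
  then obtain c where "\<And>t. t \<in> I \<Longrightarrow> f t \<bullet> f t = c"
    using has_vector_derivative_zero_constant[OF \<open>convex I\<close>] by metis
  then show ?thesis
    by (auto simp: norm_eq_sqrt_inner)
qed

lemma cmod_constant_if_derivative_rotation:
  fixes P :: "real \<Rightarrow> complex"
  assumes "convex I"
    and "\<And>t. t \<in> I \<Longrightarrow> (P has_vector_derivative \<i> * of_real (\<theta> t) * P t) (at t within I)"
  shows "\<exists>C. \<forall>t\<in>I. cmod (P t) = C"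
proof (rule norm_constant_if_derivative_orthogonal[OF assms])
  show "P t \<bullet> (\<i> * of_real (\<theta> t) * P t) = 0" for t
    by (simp add: inner_complex_def algebra_simps)
qed

definition complex_of_xy :: "real^3 \<Rightarrow> complex" where
  "complex_of_xy v = Complex (v $ 1) (v $ 2)"

lemma bounded_linear_complex_of_xy: "bounded_linear complex_of_xy"
proof -
  have "linear complex_of_xy"
    by (rule linearI) (simp_all add: complex_of_xy_def complex_eq_iff)
  then show ?thesis
    by (simp add: linear_conv_bounded_linear)
qed

lemma complex_of_xy_add [simp]: "complex_of_xy (u + v) = complex_of_xy u + complex_of_xy v"
  by (simp add: complex_of_xy_def complex_eq_iff)

lemma complex_of_xy_scaleR [simp]: "complex_of_xy (c *\<^sub>R v) = of_real c * complex_of_xy v"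
  by (simp add: complex_of_xy_def complex_eq_iff)

lemma complex_of_xy_cross3:
  "complex_of_xy (cross3 u v) = \<i> * (of_real (u $ 3) * complex_of_xy v - of_real (v $ 3) * complex_of_xy u)"
  by (simp add: complex_of_xy_def cross3_simps complex_eq_iff)

lemma complex_of_xy_Omega: "complex_of_xy (Omega H) = complex_of_xy H / 2"
  by (simp add: complex_of_xy_def Omega_def complex_eq_iff)

lemma Omega_nth_3 [simp]: "Omega H $ 3 = H $ 3"
  by (simp add: Omega_def)

lemma complex_of_xy_vector: "complex_of_xy (vector [x, y, z]) = Complex x y"
  by (simp add: complex_of_xy_def)

lemma has_vector_derivative_complex_of_xy_H:
  assumes "(H has_vector_derivative cross3 X (Omega X) + cross3 Y (vector [a1, a2, 0])) F"
  shows "((\<lambda>s. complex_of_xy (H s) / 2) has_vector_derivative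
      \<i> * (of_real (Y $ 3) * Complex a1 a2 - of_real (X $ 3) * (complex_of_xy X / 2)) / 2) F"
  using has_vector_derivative_mult_left[OF bounded_linear.has_vector_derivative[OF bounded_linear_complex_of_xy assms], of "1/2"]
  by (simp add: complex_of_xy_cross3 complex_of_xy_Omega complex_of_xy_vector field_simps)

lemma has_vector_derivative_complex_of_xy_h:
  assumes "(h has_vector_derivative cross3 Y (Omega X) + k *\<^sub>R cross3 X (vector [a1, a2, 0])) F"
  shows "((\<lambda>s. complex_of_xy (h s)) has_vector_derivative
      \<i> * (of_real (Y $ 3) * (complex_of_xy X / 2) - of_real (X $ 3) * complex_of_xy Y
             + of_real k * of_real (X $ 3) * Complex a1 a2)) F"
  using bounded_linear.has_vector_derivative[OF bounded_linear_complex_of_xy assms]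
  by (simp add: complex_of_xy_cross3 complex_of_xy_Omega complex_of_xy_vector algebra_simps)

definition kowalevski_variable :: "real \<Rightarrow> complex \<Rightarrow> real^3 \<Rightarrow> real^3 \<Rightarrow> complex" where
  "kowalevski_variable k a X Y = (complex_of_xy X / 2)\<^sup>2 - a * (complex_of_xy Y - of_real k * a)"

lemma has_vector_derivative_kowalevski_variable:
  assumes dH: "(H has_vector_derivative
      cross3 (H t) (Omega (H t)) + cross3 (h t) (vector [a1, a2, 0])) (at t within S)"
    and dh: "(h has_vector_derivative
      cross3 (h t) (Omega (H t)) + k *\<^sub>R cross3 (H t) (vector [a1, a2, 0])) (at t within S)"
  shows "((\<lambda>s. kowalevski_variable k (Complex a1 a2) (H s) (h s)) has_vector_derivative
      \<i> * of_real (- H t $ 3) * kowalevski_variable k (Complex a1 a2) (H t) (h t)) (at t within S)"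
proof -
  define a where "a = Complex a1 a2"
  define z where "z = complex_of_xy (H t) / 2"
  define w where "w = complex_of_xy (h t)"
  define z' where "z' = \<i> * (of_real (h t $ 3) * a - of_real (H t $ 3) * z) / 2"
  define w' where "w' = \<i> * (of_real (h t $ 3) * z - of_real (H t $ 3) * w + of_real k * of_real (H t $ 3) * a)"
  have dz: "((\<lambda>s. complex_of_xy (H s) / 2) has_vector_derivative z') (at t within S)"
    unfolding z'_def z_def a_def by (rule has_vector_derivative_complex_of_xy_H[OF dH])
  have dw: "((\<lambda>s. complex_of_xy (h s)) has_vector_derivative w') (at t within S)"
    unfolding w'_def z_def w_def a_def by (rule has_vector_derivative_complex_of_xy_h[OF dh])
  show ?thesis
    unfolding kowalevski_variable_def power2_eq_square a_def[symmetric]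
    by (rule has_vector_derivative_eq_rhs[OF has_vector_derivative_diff[OF has_vector_derivative_mult[OF dz dz]
          has_vector_derivative_mult_right[OF has_vector_derivative_diff[OF dw has_vector_derivative_const]]]])
      (simp add: z'_def w'_def z_def w_def algebra_simps)
qed

theorem mainTheorem1:
  fixes k a1 a2 :: real and I :: "real set"
    and H h :: "real \<Rightarrow> real^3"
  assumes hk: "k \<in> {0, 1, -1}"
    and hI: "is_interval I"
    and dH: "\<And>t. t \<in> I \<Longrightarrow> (H has_vector_derivative
              (cross3 (H t) (Omega (H t)) + cross3 (h t) (vector [a1, a2, 0])))
              (at t within I)"
    and dh: "\<And>t. t \<in> I \<Longrightarrow> (h has_vector_derivative
              (cross3 (h t) (Omega (H t)) + k *\<^sub>R cross3 (H t) (vector [a1, a2, 0])))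
              (at t within I)"
  shows "\<exists>C. \<forall>t\<in>I.
    (let z = Complex (H t $ 1 / 2) (H t $ 2 / 2);
         w = Complex (h t $ 1) (h t $ 2);
         a = Complex a1 a2
     in (cmod (z\<^sup>2 - a * (w - complex_of_real k * a)))\<^sup>2) = C"
proof -
  define P where "P t = kowalevski_variable k (Complex a1 a2) (H t) (h t)" for t
  have "convex I"
    using hI by (simp add: is_interval_convex)
  have P': "(P has_vector_derivative \<i> * of_real (- H t $ 3) * P t) (at t within I)" if "t \<in> I" for t
    unfolding P_def using has_vector_derivative_kowalevski_variable[OF dH dh, OF that that] .
  from cmod_constant_if_derivative_rotation[OF \<open>convex I\<close> P']
  obtain C where C: "\<forall>t\<in>I. cmod (P t) = C" ..
  have "Complex (H t $ 1 / 2) (H t $ 2 / 2) = complex_of_xy (H t) / 2"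
    and "Complex (h t $ 1) (h t $ 2) = complex_of_xy (h t)" for t
    by (simp_all add: complex_of_xy_def complex_eq_iff)
  then have "(let z = Complex (H t $ 1 / 2) (H t $ 2 / 2);
         w = Complex (h t $ 1) (h t $ 2);
         a = Complex a1 a2
     in (cmod (z\<^sup>2 - a * (w - complex_of_real k * a)))\<^sup>2) = (cmod (P t))\<^sup>2" for t
    by (simp only: Let_def P_def kowalevski_variable_def)
  then show ?thesis
    using C by auto
qed

end
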